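(* Let $L=\{\ell_1,\dots,\ell_n\}$, $R=\{r_1,\dots,r_d\}$ and let $T_1,T_2$ be two compatible spanning trees of the complete bipartite graph on $L\sqcup R$ with right degree vectors $v$ and $v+e_p-e_q$ respectively. If $(\ell_s,r_p)$ is an edge of $T_1$, then it is also an edge of $T_2$. Furthermore, the degree of $\ell_s$ in $T_1$ is greater than or equal to its degree in $T_2$.
   Context: Graphs are identified with edge sets; right degree vector $=(\deg r_1,\dots,\deg r_d)$; $e_p$ is a standard unit vector. Two graphs are compatible if for all $J\subseteq L$, $I\subseteq R$ such that both contain a perfect matching between $J$ and $I$ (as subgraphs), these perfect matchings are equal. *)

theory Defs
  imports Main
begin

text \<open>Left vertices are l_0..l_(n-1), right vertices r_0..r_(d-1) (0-based).
  A graph on L + R (subgraph of the complete bipartite graph) is its edge set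
  T :: (nat \<times> nat) set, where (i,j) stands for the edge {l_i, r_j}.\<close>

definition bip_vertices :: "nat \<Rightarrow> nat \<Rightarrow> (nat + nat) set" where
  "bip_vertices n d = Inl ` {..<n} \<union> Inr ` {..<d}"

definition bip_adj :: "(nat \<times> nat) set \<Rightarrow> ((nat + nat) \<times> (nat + nat)) set" where
  "bip_adj T = {(Inl i, Inr j) | i j. (i, j) \<in> T} \<union> {(Inr j, Inl i) | i j. (i, j) \<in> T}"

definition bip_connected :: "nat \<Rightarrow> nat \<Rightarrow> (nat \<times> nat) set \<Rightarrow> bool" where
  "bip_connected n d T \<longleftrightarrow>
     (\<forall>u \<in> bip_vertices n d. \<forall>v \<in> bip_vertices n d. (u, v) \<in> (bip_adj T)\<^sup>*)"

definition bip_acyclic :: "(nat \<times> nat) set \<Rightarrow> bool" where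
  "bip_acyclic T \<longleftrightarrow>
     (\<forall>i j. (i, j) \<in> T \<longrightarrow> (Inl i, Inr j) \<notin> (bip_adj (T - {(i, j)}))\<^sup>*)"

definition spanning_tree :: "nat \<Rightarrow> nat \<Rightarrow> (nat \<times> nat) set \<Rightarrow> bool" where
  "spanning_tree n d T \<longleftrightarrow>
     T \<subseteq> {..<n} \<times> {..<d} \<and> bip_connected n d T \<and> bip_acyclic T"

definition perfect_matching_between ::
    "(nat \<times> nat) set \<Rightarrow> nat set \<Rightarrow> nat set \<Rightarrow> bool" where
  "perfect_matching_between M J I \<longleftrightarrow>
     M \<subseteq> J \<times> I \<and>
     (\<forall>i \<in> J. \<exists>!j. (i, j) \<in> M) \<and>
     (\<forall>j \<in> I. \<exists>!i. (i, j) \<in> M)"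

definition compatible :: "nat \<Rightarrow> nat \<Rightarrow> (nat \<times> nat) set \<Rightarrow> (nat \<times> nat) set \<Rightarrow> bool" where
  "compatible n d T1 T2 \<longleftrightarrow>
     (\<forall>J I M1 M2. J \<subseteq> {..<n} \<longrightarrow> I \<subseteq> {..<d} \<longrightarrow>
        M1 \<subseteq> T1 \<longrightarrow> perfect_matching_between M1 J I \<longrightarrow>
        M2 \<subseteq> T2 \<longrightarrow> perfect_matching_between M2 J I \<longrightarrow> M1 = M2)"

definition right_deg :: "(nat \<times> nat) set \<Rightarrow> nat \<Rightarrow> nat" where
  "right_deg T j = card {i. (i, j) \<in> T}"

definition left_deg :: "(nat \<times> nat) set \<Rightarrow> nat \<Rightarrow> nat" where
  "left_deg T i = card {j. (i, j) \<in> T}"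

end

theory Submission
  imports Defs
begin

text \<open>Orient the edges of T1 from L to R and those of T2 from R to L. A simple directed
  cycle of the resulting digraph alternates between T1- and T2-edges, so its two halves are
  perfect matchings in T1 and in T2 between the same vertex sets; by compatibility they
  coincide, hence every edge on a directed cycle lies in both trees. Now take an initial
  strongly connected component Y of the digraph. Every T1-edge entering a right vertex of Y is
  on a cycle, hence a T2-edge as well. If r_p were not in Y, every right vertex of Y would have
  T2-degree at most its T1-degree, so its T1- and T2-neighbourhoods would agree and Y would be
  closed under T2-adjacency; as T2 is connected, Y would contain r_p after all. So r_p lies in
  Y, whence l_s lies in Y with (l_s, r_p) in T2, and every T2-edge at l_s, entering Y from r_j,
  closes a cycle and is a T1-edge.\<close>

lemma rtrancl_imp_inj_walk:
  assumes "(x, y) \<in> A\<^sup>*"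
  obtains f N where "f 0 = x" "f N = y" "\<And>i. i < N \<Longrightarrow> (f i, f (Suc i)) \<in> A" "inj_on f {..N}"
proof -
  define walk where "walk N f \<longleftrightarrow> f 0 = x \<and> f N = y \<and> (\<forall>i<N. (f i, f (Suc i)) \<in> A)" for N f
  have "\<exists>N f. walk N f"
    using assms unfolding walk_def rtrancl_power relpow_fun_conv by blast
  then obtain N where "\<exists>f. walk N f" and shortest: "\<And>N' f'. N' < N \<Longrightarrow> \<not> walk N' f'"
    using exists_least_iff[of "\<lambda>N. \<exists>f. walk N f"] by blast
  then obtain f where walk: "walk N f" by blast
  have "f i \<noteq> f j" if ij: "i < j" "j \<le> N" for i j
  proof
    assume "f i = f j"
    \<comment> \<open>cutting out the closed subwalk from i to j gives a shorter walk\<close>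
    define f' where "f' k = (if k \<le> i then f k else f (k + (j - i)))" for k
    have "walk (N - (j - i)) f'"
      unfolding walk_def
    proof (intro conjI allI impI)
      show "f' 0 = x"
        using walk by (simp add: walk_def f'_def)
      show "f' (N - (j - i)) = y"
        using walk ij \<open>f i = f j\<close> by (cases "j = N") (auto simp: walk_def f'_def)
      fix k assume "k < N - (j - i)"
      then show "(f' k, f' (Suc k)) \<in> A"
        using walk ij \<open>f i = f j\<close> unfolding walk_def f'_def
        by (cases "k < i"; cases "k = i") (auto simp: not_less_eq_eq)
    qed
    moreover have "N - (j - i) < N" using ij by simp
    ultimately show False using shortest by blast
  qed
  then have "inj_on f {..N}"
    by (metis atMost_iff inj_onI linorder_neqE_nat)
  then show thesis using walk that unfolding walk_def by blast
qed

definition permutation_rel_on :: "'a set \<Rightarrow> ('a \<times> 'a) set \<Rightarrow> bool" where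
  "permutation_rel_on V C \<longleftrightarrow>
     C \<subseteq> V \<times> V \<and> (\<forall>v \<in> V. \<exists>!w. (v, w) \<in> C) \<and> (\<forall>w \<in> V. \<exists>!v. (v, w) \<in> C)"

lemma permutation_rel_on_converse:
  "permutation_rel_on V C \<Longrightarrow> permutation_rel_on V (C\<inverse>)"
  unfolding permutation_rel_on_def by blast

lemma permutation_rel_on_graph:
  assumes "inj_on g I" "inj_on h I" "g ` I = V" "h ` I = V"
  shows "permutation_rel_on V ((\<lambda>i. (g i, h i)) ` I)"
  unfolding permutation_rel_on_def
proof (intro conjI ballI)
  show "(\<lambda>i. (g i, h i)) ` I \<subseteq> V \<times> V"
    using assms(3,4) by blast
next
  fix v assume "v \<in> V"
  then obtain i where "i \<in> I" "v = g i" using assms(3) by blast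
  then show "\<exists>!w. (v, w) \<in> (\<lambda>i. (g i, h i)) ` I"
    using assms(1) by (auto simp: inj_on_def)
next
  fix w assume "w \<in> V"
  then obtain i where "i \<in> I" "w = h i" using assms(4) by blast
  then show "\<exists>!v. (v, w) \<in> (\<lambda>i. (g i, h i)) ` I"
    using assms(2) by (auto simp: inj_on_def)
qed

lemma bij_betw_Suc_mod: "bij_betw (\<lambda>i. Suc i mod m) {..<m} {..<m}"
proof (rule bij_betw_imageI)
  show "inj_on (\<lambda>i. Suc i mod m) {..<m}"
    by (auto simp: inj_on_def mod_if split: if_splits)
  then show "(\<lambda>i. Suc i mod m) ` {..<m} = {..<m}"
    by (intro endo_inj_surj) auto
qed

lemma permutation_rel_on_cycle:
  assumes "inj_on f {..<m}"
  shows "permutation_rel_on (f ` {..<m}) ((\<lambda>i. (f i, f (Suc i mod m))) ` {..<m})"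
proof (rule permutation_rel_on_graph[OF assms])
  have "bij_betw (f \<circ> (\<lambda>i. Suc i mod m)) {..<m} (f ` {..<m})"
    using bij_betw_Suc_mod assms by (blast intro: bij_betw_trans inj_on_imp_bij_betw)
  then show "inj_on (\<lambda>i. f (Suc i mod m)) {..<m}" "(\<lambda>i. f (Suc i mod m)) ` {..<m} = f ` {..<m}"
    by (simp_all add: bij_betw_def comp_def)
qed simp

definition alt_arcs :: "('a \<times> 'b) set \<Rightarrow> ('a \<times> 'b) set \<Rightarrow> (('a + 'b) \<times> ('a + 'b)) set" where
  "alt_arcs T1 T2 = {(Inl i, Inr j) | i j. (i, j) \<in> T1} \<union> {(Inr j, Inl i) | i j. (i, j) \<in> T2}"

lemma alt_arcs_iff [simp]:
  "(Inl i, Inr j) \<in> alt_arcs T1 T2 \<longleftrightarrow> (i, j) \<in> T1"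
  "(Inr j, Inl i) \<in> alt_arcs T1 T2 \<longleftrightarrow> (i, j) \<in> T2"
  "(Inl i, Inl i') \<notin> alt_arcs T1 T2"
  "(Inr j, Inr j') \<notin> alt_arcs T1 T2"
  by (auto simp: alt_arcs_def)

lemma converse_alt_arcs: "(alt_arcs T1 T2)\<inverse> = alt_arcs T2 T1"
  by (auto simp: alt_arcs_def)

lemma alt_arcs_subset_bip_vertices:
  assumes "T1 \<subseteq> {..<n} \<times> {..<d}" "T2 \<subseteq> {..<n} \<times> {..<d}"
  shows "alt_arcs T1 T2 \<subseteq> bip_vertices n d \<times> bip_vertices n d"
  using assms unfolding alt_arcs_def bip_vertices_def by auto

lemma perfect_matching_between_alt_arcs:
  assumes CA: "C \<subseteq> alt_arcs T1 T2" and perm: "permutation_rel_on V C"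
  shows "perfect_matching_between {(a, b). (Inl a, Inr b) \<in> C} {a. Inl a \<in> V} {b. Inr b \<in> V}"
  unfolding perfect_matching_between_def
proof (intro conjI ballI)
  show "{(a, b). (Inl a, Inr b) \<in> C} \<subseteq> {a. Inl a \<in> V} \<times> {b. Inr b \<in> V}"
    using perm unfolding permutation_rel_on_def by auto
next
  fix a assume "a \<in> {a. Inl a \<in> V}"
  with perm have "\<exists>!w. (Inl a, w) \<in> C" unfolding permutation_rel_on_def by simp
  then obtain w where w: "(Inl a, w) \<in> C" and uniq: "\<And>w'. (Inl a, w') \<in> C \<Longrightarrow> w' = w"
    by (elim ex1E) blast
  from w CA have "(Inl a, w) \<in> alt_arcs T1 T2" by blast
  then obtain b where "w = Inr b" by (cases w) auto
  with w uniq show "\<exists>!b. (a, b) \<in> {(a, b). (Inl a, Inr b) \<in> C}"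
    by blast
next
  fix b assume "b \<in> {b. Inr b \<in> V}"
  with perm have "\<exists>!v. (v, Inr b) \<in> C" unfolding permutation_rel_on_def by simp
  then obtain v where v: "(v, Inr b) \<in> C" and uniq: "\<And>v'. (v', Inr b) \<in> C \<Longrightarrow> v' = v"
    by (elim ex1E) blast
  from v CA have "(v, Inr b) \<in> alt_arcs T1 T2" by blast
  then obtain a where "v = Inl a" by (cases v) auto
  with v uniq show "\<exists>!a. (a, b) \<in> {(a, b). (Inl a, Inr b) \<in> C}"
    by blast
qed

lemma compatible_sym: "compatible n d T1 T2 \<Longrightarrow> compatible n d T2 T1"
  unfolding compatible_def by metis

lemma compatible_T1_only_edge_not_on_cycle:
  assumes T1: "T1 \<subseteq> {..<n} \<times> {..<d}" and T2: "T2 \<subseteq> {..<n} \<times> {..<d}"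
    and comp: "compatible n d T1 T2" and "(l, r) \<in> T1" and "(l, r) \<notin> T2"
  shows "(Inr r, Inl l) \<notin> (alt_arcs T1 T2)\<^sup>*"
proof
  let ?A = "alt_arcs T1 T2"
  assume "(Inr r, Inl l) \<in> ?A\<^sup>*"
  then obtain f N where f0: "f 0 = Inr r" and fN: "f N = Inl l"
    and walk: "\<And>i. i < N \<Longrightarrow> (f i, f (Suc i)) \<in> ?A" and inj: "inj_on f {..N}"
    by (rule rtrancl_imp_inj_walk) auto
  define V where "V = f ` {..<Suc N}"
  define C where "C = (\<lambda>i. (f i, f (Suc i mod Suc N))) ` {..<Suc N}"
  \<comment> \<open>the walk closed up by the arc from l to r is a simple cycle\<close>
  have perm: "permutation_rel_on V C"
    unfolding V_def C_def using inj lessThan_Suc_atMost by (intro permutation_rel_on_cycle) simp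
  have lr: "(Inl l, Inr r) \<in> C"
    unfolding C_def using f0 fN by force
  have CA: "C \<subseteq> ?A"
  proof
    fix e assume "e \<in> C"
    then obtain i where "i < Suc N" "e = (f i, f (Suc i mod Suc N))" unfolding C_def by blast
    then show "e \<in> ?A"
      using walk f0 fN \<open>(l, r) \<in> T1\<close> by (cases "i = N") auto
  qed
  have V: "V \<subseteq> bip_vertices n d"
  proof
    fix v assume "v \<in> V"
    with perm obtain w where "(v, w) \<in> C" unfolding permutation_rel_on_def by blast
    with CA alt_arcs_subset_bip_vertices[OF T1 T2] show "v \<in> bip_vertices n d" by blast
  qed
  define M1 where "M1 = {(a, b). (Inl a, Inr b) \<in> C}"
  define M2 where "M2 = {(a, b). (Inl a, Inr b) \<in> C\<inverse>}"
  have pm1: "perfect_matching_between M1 {a. Inl a \<in> V} {b. Inr b \<in> V}"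
    unfolding M1_def using CA perm by (rule perfect_matching_between_alt_arcs)
  have pm2: "perfect_matching_between M2 {a. Inl a \<in> V} {b. Inr b \<in> V}"
    unfolding M2_def using CA perm converse_alt_arcs
    by (intro perfect_matching_between_alt_arcs permutation_rel_on_converse) auto
  have M1: "M1 \<subseteq> T1" and M2: "M2 \<subseteq> T2"
    using CA unfolding M1_def M2_def by auto
  have J: "{a. Inl a \<in> V} \<subseteq> {..<n}" and I: "{b. Inr b \<in> V} \<subseteq> {..<d}"
    using V unfolding bip_vertices_def by auto
  have "M1 = M2"
    using comp[unfolded compatible_def, rule_format, OF J I M1 pm1 M2 pm2] .
  moreover have "(l, r) \<in> M1" "(l, r) \<notin> M2"
    using lr M2 \<open>(l, r) \<notin> T2\<close> unfolding M1_def by auto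
  ultimately show False by simp
qed

lemma compatible_T2_only_edge_not_on_cycle:
  assumes "T1 \<subseteq> {..<n} \<times> {..<d}" "T2 \<subseteq> {..<n} \<times> {..<d}"
    and "compatible n d T1 T2" and "(l, r) \<in> T2" and "(l, r) \<notin> T1"
  shows "(Inl l, Inr r) \<notin> (alt_arcs T1 T2)\<^sup>*"
  using compatible_T1_only_edge_not_on_cycle[OF assms(2,1) compatible_sym[OF assms(3)] assms(4,5)]
  unfolding converse_alt_arcs[of T1 T2, symmetric] rtrancl_converse by simp

lemma rtrancl_source_mem:
  assumes "(x, y) \<in> A\<^sup>*" "A \<subseteq> V \<times> V" "y \<in> V"
  shows "x \<in> V"
  using assms by (induction rule: converse_rtrancl_induct) auto

definition in_initial_scc :: "('a \<times> 'a) set \<Rightarrow> 'a \<Rightarrow> bool" where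
  "in_initial_scc A w \<longleftrightarrow> (\<forall>y. (y, w) \<in> A\<^sup>* \<longrightarrow> (w, y) \<in> A\<^sup>*)"

lemma in_initial_scc_exists:
  assumes V: "finite V" "A \<subseteq> V \<times> V" and "x \<in> V"
  obtains w where "w \<in> V" "in_initial_scc A w"
proof -
  define anc where "anc w = {y. (y, w) \<in> A\<^sup>*}" for w
  have anc_V: "anc w \<subseteq> V" if "w \<in> V" for w
    unfolding anc_def using rtrancl_source_mem[OF _ V(2) that] by blast
  obtain w where w: "w \<in> V" and least: "\<And>y. y \<in> V \<Longrightarrow> card (anc w) \<le> card (anc y)"
    using ex_has_least_nat[of "\<lambda>w. w \<in> V" x "\<lambda>w. card (anc w)"] \<open>x \<in> V\<close> by blast
  have "in_initial_scc A w"
    unfolding in_initial_scc_def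
  proof (intro allI impI)
    fix y assume yw: "(y, w) \<in> A\<^sup>*"
    then have "y \<in> V" using rtrancl_source_mem[OF _ V(2) w] by blast
    moreover have "anc y \<subseteq> anc w"
      unfolding anc_def using yw by (auto intro: rtrancl_trans)
    ultimately have "anc y = anc w"
      using least V(1) anc_V w by (meson card_seteq finite_subset)
    then show "(w, y) \<in> A\<^sup>*" unfolding anc_def by blast
  qed
  with w that show thesis by blast
qed

lemma in_initial_scc_T1_edge:
  assumes "T1 \<subseteq> {..<n} \<times> {..<d}" "T2 \<subseteq> {..<n} \<times> {..<d}" "compatible n d T1 T2"
    and w: "in_initial_scc (alt_arcs T1 T2) w"
    and ij: "(i, j) \<in> T1" and jw: "(Inr j, w) \<in> (alt_arcs T1 T2)\<^sup>*"
  shows "(i, j) \<in> T2" and "(Inl i, w) \<in> (alt_arcs T1 T2)\<^sup>*"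
proof -
  show iw: "(Inl i, w) \<in> (alt_arcs T1 T2)\<^sup>*"
    using converse_rtrancl_into_rtrancl[of "Inl i" "Inr j"] ij jw by simp
  with w jw have "(Inr j, Inl i) \<in> (alt_arcs T1 T2)\<^sup>*"
    unfolding in_initial_scc_def by (blast intro: rtrancl_trans)
  then show "(i, j) \<in> T2"
    using compatible_T1_only_edge_not_on_cycle[OF assms(1-3) ij] by blast
qed

lemma in_initial_scc_T2_edge:
  assumes "T1 \<subseteq> {..<n} \<times> {..<d}" "T2 \<subseteq> {..<n} \<times> {..<d}" "compatible n d T1 T2"
    and w: "in_initial_scc (alt_arcs T1 T2) w"
    and ij: "(i, j) \<in> T2" and iw: "(Inl i, w) \<in> (alt_arcs T1 T2)\<^sup>*"
  shows "(i, j) \<in> T1" and "(Inr j, w) \<in> (alt_arcs T1 T2)\<^sup>*"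
proof -
  show jw: "(Inr j, w) \<in> (alt_arcs T1 T2)\<^sup>*"
    using converse_rtrancl_into_rtrancl[of "Inr j" "Inl i"] ij iw by simp
  with w iw have "(Inl i, Inr j) \<in> (alt_arcs T1 T2)\<^sup>*"
    unfolding in_initial_scc_def by (blast intro: rtrancl_trans)
  then show "(i, j) \<in> T1"
    using compatible_T2_only_edge_not_on_cycle[OF assms(1-3) ij] by blast
qed

lemma bip_connected_closed_subset:
  assumes "bip_connected n d T" "x \<in> bip_vertices n d" "x \<in> Y"
    and closed: "\<And>u v. (u, v) \<in> bip_adj T \<Longrightarrow> u \<in> Y \<Longrightarrow> v \<in> Y"
  shows "bip_vertices n d \<subseteq> Y"
proof
  fix v assume "v \<in> bip_vertices n d"
  with assms(1,2) have "(x, v) \<in> (bip_adj T)\<^sup>*"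
    unfolding bip_connected_def by blast
  then show "v \<in> Y"
    using \<open>x \<in> Y\<close> closed by (induction rule: rtrancl_induct) blast+
qed

lemma in_initial_scc_reaches_right_deg_gain:
  assumes T1: "T1 \<subseteq> {..<n} \<times> {..<d}" and T2: "T2 \<subseteq> {..<n} \<times> {..<d}"
    and comp: "compatible n d T1 T2" and conn: "bip_connected n d T2"
    and w: "w \<in> bip_vertices n d" "in_initial_scc (alt_arcs T1 T2) w"
    and deg: "\<And>j. j < d \<Longrightarrow> j \<noteq> p \<Longrightarrow> right_deg T2 j \<le> right_deg T1 j"
    and "p < d"
  shows "(Inr p, w) \<in> (alt_arcs T1 T2)\<^sup>*"
proof (rule ccontr)
  let ?A = "alt_arcs T1 T2"
  define Y where "Y = {y. (y, w) \<in> ?A\<^sup>*}"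
  assume "(Inr p, w) \<notin> ?A\<^sup>*"
  have same_nbrs: "{i. (i, j) \<in> T1} = {i. (i, j) \<in> T2}" if "Inr j \<in> Y" for j
  proof (rule card_seteq)
    have "Inr j \<in> bip_vertices n d"
      using that rtrancl_source_mem[OF _ alt_arcs_subset_bip_vertices[OF T1 T2] w(1)]
      unfolding Y_def by blast
    moreover have "j \<noteq> p" using that \<open>(Inr p, w) \<notin> ?A\<^sup>*\<close> unfolding Y_def by blast
    ultimately show "card {i. (i, j) \<in> T2} \<le> card {i. (i, j) \<in> T1}"
      using deg unfolding right_deg_def bip_vertices_def by auto
    show "finite {i. (i, j) \<in> T2}"
      using T2 by (blast intro: finite_subset[of _ "{..<n}"])
    show "{i. (i, j) \<in> T1} \<subseteq> {i. (i, j) \<in> T2}"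
      using that in_initial_scc_T1_edge(1)[OF T1 T2 comp w(2)] unfolding Y_def by blast
  qed
  have "bip_vertices n d \<subseteq> Y"
  proof (rule bip_connected_closed_subset[OF conn w(1)])
    show "w \<in> Y" unfolding Y_def by simp
    fix u v assume uv: "(u, v) \<in> bip_adj T2" and "u \<in> Y"
    then consider (LR) i j where "u = Inl i" "v = Inr j" "(i, j) \<in> T2"
      | (RL) i j where "u = Inr j" "v = Inl i" "(i, j) \<in> T2"
      unfolding bip_adj_def by blast
    then show "v \<in> Y"
    proof cases
      case LR
      then show ?thesis
        using \<open>u \<in> Y\<close> in_initial_scc_T2_edge(2)[OF T1 T2 comp w(2)] unfolding Y_def by blast
    next
      case RL
      then have "(i, j) \<in> T1" using \<open>u \<in> Y\<close> same_nbrs by blast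
      then show ?thesis
        using RL \<open>u \<in> Y\<close> in_initial_scc_T1_edge(2)[OF T1 T2 comp w(2)] unfolding Y_def by blast
    qed
  qed
  then show False
    using \<open>p < d\<close> \<open>(Inr p, w) \<notin> ?A\<^sup>*\<close> unfolding Y_def bip_vertices_def by blast
qed

theorem lemma2p11:
  fixes n d p q s :: nat and T1 T2 :: "(nat \<times> nat) set"
  assumes "spanning_tree n d T1" and "spanning_tree n d T2"
    and "compatible n d T1 T2"
    and "p < d" and "q < d" and "p \<noteq> q"
    and "\<forall>j < d. int (right_deg T2 j) =
            int (right_deg T1 j) + (if j = p then 1 else 0) - (if j = q then 1 else 0)"
    and "s < n" and "(s, p) \<in> T1"
  shows "(s, p) \<in> T2 \<and> left_deg T1 s \<ge> left_deg T2 s"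
proof -
  let ?A = "alt_arcs T1 T2"
  have T1: "T1 \<subseteq> {..<n} \<times> {..<d}" and T2: "T2 \<subseteq> {..<n} \<times> {..<d}"
    and conn: "bip_connected n d T2"
    using assms(1,2) unfolding spanning_tree_def by auto
  \<comment> \<open>only this consequence of the degree condition is used\<close>
  have deg: "right_deg T2 j \<le> right_deg T1 j" if "j < d" "j \<noteq> p" for j
    using spec[OF assms(7), of j] that by (cases "j = q") simp_all
  obtain w where w: "w \<in> bip_vertices n d" "in_initial_scc ?A w"
    using in_initial_scc_exists[OF _ alt_arcs_subset_bip_vertices[OF T1 T2], of "Inr p"] assms(4)
    unfolding bip_vertices_def by auto
  have "(Inr p, w) \<in> ?A\<^sup>*"
    using in_initial_scc_reaches_right_deg_gain[OF T1 T2 assms(3) conn w deg assms(4)] .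
  then have sp: "(s, p) \<in> T2" and sw: "(Inl s, w) \<in> ?A\<^sup>*"
    using in_initial_scc_T1_edge[OF T1 T2 assms(3) w(2) assms(9)] by auto
  have "{j. (s, j) \<in> T2} \<subseteq> {j. (s, j) \<in> T1}"
    using in_initial_scc_T2_edge(1)[OF T1 T2 assms(3) w(2) _ sw] by blast
  moreover have "finite {j. (s, j) \<in> T1}"
    using T1 by (blast intro: finite_subset[of _ "{..<d}"])
  ultimately show ?thesis
    using sp unfolding left_deg_def by (simp add: card_mono)
qed

end
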